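(* Let $\lambda \geq 2$ be an integer and let $H(\lambda)_1, \dots, H(\lambda)_{r(\lambda)}$ be all graphs on $\lambda^2+2$ vertices that have at least one isolated vertex. Then there exists a positive integer $p'(\lambda)$ such that for every $i = 1, \dots, r(\lambda)$, the graph obtained from $H(\lambda)_i$ by adding a complete graph $K_{p'(\lambda)}$ on $p'(\lambda)$ new vertices and joining every new vertex to every vertex of $H(\lambda)_i$ has smallest adjacency eigenvalue less than $-\lambda$.
   Context: The smallest eigenvalue of a graph refers to the smallest eigenvalue of its adjacency matrix. (In the paper's language this graph is $G(\mathfrak{q}(H(\lambda)_i), p'(\lambda))$: the Hoffman graph $\mathfrak{q}(H)$ with one fat vertex adjacent to all vertices of $H$, with the fat vertex replaced by a clique $K_p$.) *)

theory Defs
  imports "Jordan_Normal_Form.Char_Poly"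
begin

definition simple_graph_on :: "nat \<Rightarrow> (nat \<Rightarrow> nat \<Rightarrow> bool) \<Rightarrow> bool" where
  "simple_graph_on n E \<longleftrightarrow> (\<forall>i<n. \<not> E i i) \<and> (\<forall>i<n. \<forall>j<n. E i j \<longleftrightarrow> E j i)"

definition has_isolated_vertex :: "nat \<Rightarrow> (nat \<Rightarrow> nat \<Rightarrow> bool) \<Rightarrow> bool" where
  "has_isolated_vertex n E \<longleftrightarrow> (\<exists>v<n. \<forall>u<n. \<not> E v u)"

definition adj_mat :: "nat \<Rightarrow> (nat \<Rightarrow> nat \<Rightarrow> bool) \<Rightarrow> real mat" where
  "adj_mat n E = mat n n (\<lambda>(i, j). if E i j then 1 else 0)"

text \<open>The graph obtained from (n, E) by adding a clique K_p on the new vertices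
  n, ..., n+p-1 and joining every new vertex to every old vertex.\<close>
definition join_clique :: "nat \<Rightarrow> (nat \<Rightarrow> nat \<Rightarrow> bool) \<Rightarrow> nat \<Rightarrow> nat \<Rightarrow> bool" where
  "join_clique n E i j \<longleftrightarrow> (if i < n \<and> j < n then E i j else i \<noteq> j)"

definition smallest_eigenvalue :: "real mat \<Rightarrow> real" where
  "smallest_eigenvalue A = Min {k. eigenvalue A k}"

end

theory Submission
  imports Defs "Jordan_Normal_Form.Spectral_Radius" "HOL-Analysis.Function_Topology"
begin

(* Inside the first n = lam^2 + 2 vertices the adjacency matrix of the join is J - I - C,
   where C is the adjacency matrix of the complement of H. Take p = s^2 with s = lam^2 + lam + 1
   and the test vector x with value lam*s on an isolated vertex v of H, s on the other vertices
   of H and -1 on the clique. It sums to 0, so x^T J x = 0; and v is a neighbour of every other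
   vertex of H in the complement, so x^T C x >= 2 (lam s)(lam^2 + 1) s = lam |x|^2. The Rayleigh
   quotient of x is therefore at most -(1 + lam). Since the quadratic form attains its minimum
   on the compact unit sphere, and a minimiser is an eigenvector, the smallest eigenvalue is
   below -lam as well. *)

section \<open>Quadratic forms and the Rayleigh quotient\<close>

definition quad_form :: "nat \<Rightarrow> (nat \<Rightarrow> nat \<Rightarrow> real) \<Rightarrow> (nat \<Rightarrow> real) \<Rightarrow> real" where
  "quad_form N B y = (\<Sum>i<N. \<Sum>j<N. B i j * y i * y j)"

definition sq_norm :: "nat \<Rightarrow> (nat \<Rightarrow> real) \<Rightarrow> real" where
  "sq_norm N y = (\<Sum>i<N. (y i)^2)"

lemma quad_form_cong:
  "(\<And>i j. i < N \<Longrightarrow> j < N \<Longrightarrow> B i j = C i j) \<Longrightarrow> (\<And>i. i < N \<Longrightarrow> y i = z i)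
    \<Longrightarrow> quad_form N B y = quad_form N C z"
  unfolding quad_form_def by (intro sum.cong refl) auto

lemma sq_norm_cong: "(\<And>i. i < N \<Longrightarrow> y i = z i) \<Longrightarrow> sq_norm N y = sq_norm N z"
  unfolding sq_norm_def by (intro sum.cong refl) auto

lemma quad_form_scale: "quad_form N B (\<lambda>i. a * y i) = a^2 * quad_form N B y"
  unfolding quad_form_def by (simp add: sum_distrib_left power2_eq_square algebra_simps)

lemma sq_norm_scale: "sq_norm N (\<lambda>i. a * y i) = a^2 * sq_norm N y"
  unfolding sq_norm_def by (simp add: sum_distrib_left power_mult_distrib)

lemma sq_norm_nonneg: "sq_norm N y \<ge> 0"
  unfolding sq_norm_def by (simp add: sum_nonneg)

lemma sq_norm_eq_0_iff: "sq_norm N y = 0 \<longleftrightarrow> (\<forall>i<N. y i = 0)"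
  unfolding sq_norm_def by (simp add: sum_nonneg_eq_0_iff) blast

lemma square_le_sq_norm: "i < N \<Longrightarrow> (y i)^2 \<le> sq_norm N y"
  unfolding sq_norm_def by (rule member_le_sum) auto

lemma quad_form_eq_0: "(\<And>i. i < N \<Longrightarrow> y i = 0) \<Longrightarrow> quad_form N B y = 0"
  unfolding quad_form_def by simp

lemma quad_form_diff: "quad_form N (\<lambda>i j. B i j - C i j) y = quad_form N B y - quad_form N C y"
  unfolding quad_form_def by (simp add: algebra_simps sum_subtractf)

lemma quad_form_const_1: "quad_form N (\<lambda>i j. 1) y = (\<Sum>i<N. y i)^2"
  unfolding quad_form_def by (simp add: power2_eq_square sum_product mult.assoc)

lemma quad_form_diag: "quad_form N (\<lambda>i j. m * of_bool (i = j)) y = m * sq_norm N y"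
proof -
  have "(\<Sum>j<N. m * of_bool (i = j) * y i * y j) = m * (y i)^2" if "i < N" for i
  proof -
    have "(\<Sum>j<N. m * of_bool (i = j) * y i * y j) = (\<Sum>j<N. of_bool (j = i) * (m * y i * y j))"
      by (intro sum.cong) auto
    also have "\<dots> = m * (y i)^2"
      using that by (simp add: Int_absorb1 power2_eq_square)
    finally show ?thesis .
  qed
  then show ?thesis
    unfolding quad_form_def sq_norm_def by (simp add: sum_distrib_left)
qed

lemma quad_form_add_unit:
  assumes sym: "\<And>i j. i < N \<Longrightarrow> j < N \<Longrightarrow> B i j = B j i" and k: "k < N"
  shows "quad_form N B (\<lambda>i. x i + t * of_bool (i = k)) =
    quad_form N B x + 2 * t * (\<Sum>j<N. B k j * x j) + t^2 * B k k"
proof -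
  define e where "e i = (of_bool (i = k) :: real)" for i
  have unit: "{..<N} \<inter> {k} = {k}" using k by auto
  have "B i j * (x i + t * e i) * (x j + t * e j) = B i j * x i * x j
      + t * (e i * (B i j * x j)) + t * (e j * (B i j * x i)) + t^2 * (e i * (e j * B i j))"
    for i j by (simp add: algebra_simps power2_eq_square)
  then have "quad_form N B (\<lambda>i. x i + t * e i) = quad_form N B x
      + t * (\<Sum>i<N. e i * (\<Sum>j<N. B i j * x j)) + t * (\<Sum>i<N. \<Sum>j<N. e j * (B i j * x i))
      + t^2 * (\<Sum>i<N. e i * (\<Sum>j<N. e j * B i j))"
    by (simp add: quad_form_def sum.distrib sum_distrib_left)
  also have "(\<Sum>i<N. \<Sum>j<N. e j * (B i j * x i)) = (\<Sum>j<N. B k j * x j)"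
    using sym k by (simp add: e_def unit)
  finally show ?thesis
    by (simp add: e_def unit algebra_simps)
qed

lemma nonneg_quadratic_linear_coeff_eq_0:
  fixes a b :: real
  assumes "\<And>t. a * t + b * t^2 \<ge> 0"
  shows "a = 0"
proof (rule ccontr)
  assume "a \<noteq> 0"
  define s where "s = 1 / (\<bar>b\<bar> + 1)"
  have "s > 0" "b * s < 1" by (auto simp: s_def field_simps)
  with \<open>a \<noteq> 0\<close> have "a^2 * s * (b * s - 1) < 0"
    by (simp add: mult_pos_neg)
  moreover have "a * (- a * s) + b * (- a * s)^2 = a^2 * s * (b * s - 1)"
    by (simp add: power2_eq_square algebra_simps)
  ultimately show False using assms[of "- a * s"] by simp
qed

lemma quad_form_min_in_kernel:
  assumes sym: "\<And>i j. i < N \<Longrightarrow> j < N \<Longrightarrow> B i j = B j i"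
    and nonneg: "\<And>y. quad_form N B y \<ge> 0" and "quad_form N B x = 0" and "k < N"
  shows "(\<Sum>j<N. B k j * x j) = 0"
proof -
  have "2 * (\<Sum>j<N. B k j * x j) = 0"
  proof (rule nonneg_quadratic_linear_coeff_eq_0)
    fix t
    show "2 * (\<Sum>j<N. B k j * x j) * t + B k k * t^2 \<ge> 0"
      using nonneg[of "\<lambda>i. x i + t * of_bool (i = k)"] quad_form_add_unit[OF sym \<open>k < N\<close>]
        \<open>quad_form N B x = 0\<close>
      by (simp add: algebra_simps)
  qed
  then show ?thesis by simp
qed

lemma continuous_on_sq_norm: "continuous_on UNIV (sq_norm N)"
  unfolding sq_norm_def by (intro continuous_intros continuous_on_product_coordinates)

lemma continuous_on_quad_form: "continuous_on UNIV (quad_form N B)"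
  unfolding quad_form_def by (intro continuous_intros continuous_on_product_coordinates)

(* Vectors of length N are functions nat => real; requiring them to vanish from N on makes the
   unit sphere compact in the product topology. *)
lemma compact_unit_sphere: "compact {y :: nat \<Rightarrow> real. sq_norm N y = 1 \<and> (\<forall>i\<ge>N. y i = 0)}"
proof -
  let ?C = "PiE UNIV (\<lambda>i. if i < N then {-1..1::real} else {0})"
  have "compactin (product_topology (\<lambda>_. euclidean) UNIV) ?C"
    unfolding compactin_PiE by auto
  then have "compact ?C"
    by (simp add: euclidean_product_topology compactin_euclidean_iff)
  moreover have "closed {y. sq_norm N y = 1}"
    using closed_Collect_eq[OF continuous_on_sq_norm continuous_on_const] by simp
  moreover have "{y. sq_norm N y = 1 \<and> (\<forall>i\<ge>N. y i = 0)} = ?C \<inter> {y. sq_norm N y = 1}"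
  proof -
    have "\<bar>y i\<bar> \<le> 1" if "sq_norm N y = 1" "i < N" for y i
      using square_le_sq_norm[OF that(2), of y] that(1) by (simp add: abs_square_le_1)
    then show ?thesis
      by (auto simp: PiE_UNIV_domain abs_le_iff split: if_splits)
  qed
  ultimately show ?thesis by (simp add: compact_Int_closed)
qed

lemma quad_form_attains_min_on_unit_sphere:
  assumes "N > 0"
  obtains y0 where "sq_norm N y0 = 1" "\<And>y. quad_form N B y0 * sq_norm N y \<le> quad_form N B y"
proof -
  define S where "S = {y :: nat \<Rightarrow> real. sq_norm N y = 1 \<and> (\<forall>i\<ge>N. y i = 0)}"
  define normalize where
    "normalize y = (\<lambda>i. if i < N then (1 / sqrt (sq_norm N y)) * y i else 0)" for y
  have normalize: "normalize y \<in> S \<and> quad_form N B y = sq_norm N y * quad_form N B (normalize y)"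
    if "sq_norm N y \<noteq> 0" for y
  proof -
    have scale: "(1 / sqrt (sq_norm N y))^2 = 1 / sq_norm N y"
      using sq_norm_nonneg[of N y] by (simp add: power_divide)
    have "sq_norm N (normalize y) = (1 / sqrt (sq_norm N y))^2 * sq_norm N y"
      unfolding sq_norm_scale[symmetric] by (rule sq_norm_cong) (simp add: normalize_def)
    then have "sq_norm N (normalize y) = 1"
      using that by (simp add: scale)
    moreover have "quad_form N B (normalize y) = (1 / sqrt (sq_norm N y))^2 * quad_form N B y"
      unfolding quad_form_scale[symmetric] by (rule quad_form_cong) (simp_all add: normalize_def)
    ultimately show ?thesis
      using that by (simp add: S_def normalize_def scale)
  qed
  have "sq_norm N (\<lambda>_. 1) \<noteq> 0"
    using assms by (simp add: sq_norm_def)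
  then have "S \<noteq> {}" using normalize by blast
  from continuous_attains_inf[OF compact_unit_sphere[of N, folded S_def] this
      continuous_on_subset[OF continuous_on_quad_form subset_UNIV]]
  obtain y0 where "y0 \<in> S" and min: "\<And>y. y \<in> S \<Longrightarrow> quad_form N B y0 \<le> quad_form N B y"
    by blast
  show thesis
  proof
    show "sq_norm N y0 = 1" using \<open>y0 \<in> S\<close> by (simp add: S_def)
    show "quad_form N B y0 * sq_norm N y \<le> quad_form N B y" for y
    proof (cases "sq_norm N y = 0")
      case True
      then have "quad_form N B y = 0" by (simp add: sq_norm_eq_0_iff quad_form_eq_0)
      with True show ?thesis by simp
    next
      case False
      then show ?thesis
        using normalize[OF False] min sq_norm_nonneg[of N y] by (metis mult.commute mult_left_mono)
    qed
  qed
qed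

lemma rayleigh_quotient_eigenpair:
  assumes sym: "\<And>i j. i < N \<Longrightarrow> j < N \<Longrightarrow> B i j = B j i"
    and "quad_form N B x < c * sq_norm N x"
  obtains m y where "m < c" "\<exists>i<N. y i \<noteq> 0" "\<And>k. k < N \<Longrightarrow> (\<Sum>j<N. B k j * y j) = m * y k"
proof -
  have "N > 0"
    using assms(2) by (rule contrapos_pp) (simp add: quad_form_def sq_norm_def)
  then obtain y0 where y0: "sq_norm N y0 = 1"
    and min: "\<And>y. quad_form N B y0 * sq_norm N y \<le> quad_form N B y"
    using quad_form_attains_min_on_unit_sphere by blast
  define m where "m = quad_form N B y0"
  have "m * sq_norm N x < c * sq_norm N x"
    using min[of x] assms(2) by (simp add: m_def)
  then have "m < c"
    using sq_norm_nonneg[of N x] by (rule mult_right_less_imp_less)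
  define B' where "B' i j = B i j - m * of_bool (i = j)" for i j
  have quad_form_B': "quad_form N B' y = quad_form N B y - m * sq_norm N y" for y
    unfolding B'_def quad_form_diff quad_form_diag ..
  have "(\<Sum>j<N. B' k j * y0 j) = 0" if "k < N" for k
  proof (rule quad_form_min_in_kernel[OF _ _ _ that])
    show "B' i j = B' j i" if "i < N" "j < N" for i j
      using sym[OF that] by (auto simp: B'_def)
    show "quad_form N B' y \<ge> 0" for y
      using min[of y] by (simp add: quad_form_B' m_def)
    show "quad_form N B' y0 = 0"
      by (simp add: quad_form_B' m_def y0)
  qed
  moreover have "(\<Sum>j<N. B' k j * y0 j) = (\<Sum>j<N. B k j * y0 j) - m * y0 k" if "k < N" for k
  proof -
    have "(\<Sum>j<N. B' k j * y0 j) = (\<Sum>j<N. B k j * y0 j - of_bool (j = k) * (m * y0 j))"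
      by (intro sum.cong) (auto simp: B'_def algebra_simps)
    also have "\<dots> = (\<Sum>j<N. B k j * y0 j) - m * y0 k"
      using that by (simp only: sum_subtractf) (simp add: Int_absorb1)
    finally show ?thesis .
  qed
  moreover have "\<exists>i<N. y0 i \<noteq> 0"
    using y0 sq_norm_eq_0_iff[of N y0] by auto
  ultimately show thesis
    using that[OF \<open>m < c\<close>] by simp
qed

lemma eigenvalue_mat_if_eigenfunction:
  assumes "\<exists>i<N. y i \<noteq> 0" and "\<And>k. k < N \<Longrightarrow> (\<Sum>j<N. B k j * y j) = m * y k"
  shows "eigenvalue (mat N N (\<lambda>(i, j). B i j)) m"
  unfolding eigenvalue_def eigenvector_def
proof (intro exI[of _ "vec N y"] conjI)
  show "vec N y \<noteq> 0\<^sub>v (dim_row (mat N N (\<lambda>(i, j). B i j)))"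
    using assms(1) by (metis dim_row_mat(1) index_vec index_zero_vec(1))
  show "mat N N (\<lambda>(i, j). B i j) *\<^sub>v vec N y = m \<cdot>\<^sub>v vec N y"
  proof (rule eq_vecI)
    fix k assume "k < dim_vec (m \<cdot>\<^sub>v vec N y)"
    then have "k < N" by simp
    then show "(mat N N (\<lambda>(i, j). B i j) *\<^sub>v vec N y) $ k = (m \<cdot>\<^sub>v vec N y) $ k"
      using assms(2) by (simp add: scalar_prod_def row_def lessThan_atLeast0)
  qed simp
qed simp

lemma smallest_eigenvalue_le:
  assumes "A \<in> carrier_mat N N" and "eigenvalue A m"
  shows "smallest_eigenvalue A \<le> m"
proof -
  have "finite {k. eigenvalue A k}"
    using card_finite_spectrum(1)[OF assms(1)] by (simp add: spectrum_def)
  then show ?thesis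
    using assms(2) by (simp add: smallest_eigenvalue_def Min_le)
qed

lemma smallest_eigenvalue_less_if_quad_form_less:
  assumes "\<And>i j. i < N \<Longrightarrow> j < N \<Longrightarrow> B i j = B j i"
    and "quad_form N B x < c * sq_norm N x"
  shows "smallest_eigenvalue (mat N N (\<lambda>(i, j). B i j)) < c"
proof -
  obtain m y where "m < c" "\<exists>i<N. y i \<noteq> 0" "\<And>k. k < N \<Longrightarrow> (\<Sum>j<N. B k j * y j) = m * y k"
    using rayleigh_quotient_eigenpair[OF assms] by blast
  then have "eigenvalue (mat N N (\<lambda>(i, j). B i j)) m"
    by (intro eigenvalue_mat_if_eigenfunction)
  then have "smallest_eigenvalue (mat N N (\<lambda>(i, j). B i j)) \<le> m"
    by (intro smallest_eigenvalue_le[of _ N]) simp_all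
  with \<open>m < c\<close> show ?thesis by simp
qed

section \<open>Joining a graph with a clique\<close>

definition nonadj :: "nat \<Rightarrow> (nat \<Rightarrow> nat \<Rightarrow> bool) \<Rightarrow> nat \<Rightarrow> nat \<Rightarrow> real" where
  "nonadj n E i j = (if i < n \<and> j < n \<and> i \<noteq> j \<and> \<not> E i j then 1 else 0)"

lemma quad_form_row_indicator:
  fixes x :: "nat \<Rightarrow> real"
  assumes "v < N" "R \<subseteq> {..<N}"
  shows "(\<Sum>i<N. \<Sum>j<N. of_bool (i = v \<and> j \<in> R) * x i * x j) = x v * sum x R"
proof -
  have "of_bool (i = v \<and> j \<in> R) * x i * x j = of_bool (i = v) * (of_bool (j \<in> R) * (x v * x j))"
    for i j by auto
  then have "(\<Sum>i<N. \<Sum>j<N. of_bool (i = v \<and> j \<in> R) * x i * x j)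
      = (\<Sum>i<N. of_bool (i = v) * (\<Sum>j<N. of_bool (j \<in> R) * (x v * x j)))"
    by (simp only: sum_distrib_left)
  also have "\<dots> = (\<Sum>j\<in>R. x v * x j)"
    using assms by (simp add: Int_absorb1 Int_absorb2)
  finally show ?thesis by (simp add: sum_distrib_left)
qed

lemma quad_form_join_clique:
  assumes "simple_graph_on n E" and "(\<Sum>i<N. x i) = 0"
  shows "quad_form N (\<lambda>i j. if join_clique n E i j then 1 else 0) x
    = - sq_norm N x - quad_form N (nonadj n E) x"
proof -
  have "quad_form N (\<lambda>i j. if join_clique n E i j then 1 else 0) x
      = quad_form N (\<lambda>i j. (1 - 1 * of_bool (i = j)) - nonadj n E i j) x"
    using assms(1) by (intro quad_form_cong) (auto simp: join_clique_def nonadj_def simple_graph_on_def)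
  then show ?thesis
    using assms(2) by (simp only: quad_form_diff quad_form_diag quad_form_const_1) simp
qed

lemma quad_form_nonadj_isolated:
  fixes x :: "nat \<Rightarrow> real"
  assumes "simple_graph_on n E" "n \<le> N" "v < n" "\<forall>u<n. \<not> E v u" "\<And>i. i < n \<Longrightarrow> x i \<ge> 0"
  shows "2 * x v * sum x ({..<n} - {v}) \<le> quad_form N (nonadj n E) x"
proof -
  define R where "R = {..<n} - {v}"
  define D where "D i j = (of_bool (i = v \<and> j \<in> R) + of_bool (j = v \<and> i \<in> R) :: real)" for i j
  have "D i j * x i * x j \<le> nonadj n E i j * x i * x j" for i j
  proof (cases "D i j = 0")
    case True
    then show ?thesis
      using assms(5)[of i] assms(5)[of j] by (simp add: nonadj_def)
  next
    case False
    then have "D i j = 1 \<and> nonadj n E i j = 1"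
      using assms unfolding D_def R_def nonadj_def simple_graph_on_def by auto
    then show ?thesis by simp
  qed
  then have "quad_form N D x \<le> quad_form N (nonadj n E) x"
    unfolding quad_form_def by (intro sum_mono)
  moreover have "quad_form N D x = 2 * x v * sum x R"
  proof -
    have R: "v < N" "R \<subseteq> {..<N}" using assms(2,3) by (auto simp: R_def)
    have "(\<Sum>i<N. \<Sum>j<N. of_bool (j = v \<and> i \<in> R) * x i * x j)
        = (\<Sum>j<N. \<Sum>i<N. of_bool (j = v \<and> i \<in> R) * x j * x i)"
      by (subst sum.swap) (simp add: mult_ac)
    then show ?thesis
      using quad_form_row_indicator[OF R, of x]
      by (simp add: quad_form_def D_def distrib_right sum.distrib)
  qed
  ultimately show ?thesis by (simp add: R_def)
qed

lemma join_clique_test_vector: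
  fixes lam n v :: nat
  assumes "simple_graph_on n E" "v < n" "\<forall>u<n. \<not> E v u" "n = lam^2 + 2"
  defines "s \<equiv> lam^2 + lam + 1"
  defines "x \<equiv> \<lambda>i. if i = v then real lam * real s else if i < n then real s else -1"
  shows "quad_form (n + s^2) (\<lambda>i j. if join_clique n E i j then 1 else 0) x
    < - real lam * sq_norm (n + s^2) x"
proof -
  define N where "N = n + s^2"
  define R where "R = {..<n} - {v}"
  define K where "K = {n..<N}"
  define L where "L = real lam"
  have s: "real s = L^2 + L + 1" by (simp add: s_def L_def)
  have split: "(\<Sum>i<N. f i) = f v + sum f R + sum f K" for f :: "nat \<Rightarrow> real"
  proof -
    have "(\<Sum>i<N. f i) = (\<Sum>i<n. f i) + sum f K"
      unfolding K_def N_def lessThan_atLeast0 by (rule sum.atLeastLessThan_concat[symmetric]) simp_all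
    also have "(\<Sum>i<n. f i) = f v + sum f R"
      using assms(2) by (simp add: R_def sum.remove)
    finally show ?thesis .
  qed
  have card_R: "real (card R) = L^2 + 1" and card_K: "card K = s^2"
    using assms(2,4) by (simp_all add: R_def K_def N_def L_def)
  have x_v: "x v = L * real s" and x_R: "\<And>i. i \<in> R \<Longrightarrow> x i = real s"
    and x_K: "\<And>i. i \<in> K \<Longrightarrow> x i = -1"
    using assms(2) by (auto simp: x_def L_def R_def K_def)
  have sum_x_R: "sum x R = (L^2 + 1) * real s"
    using card_R by (simp add: x_R)
  have "(\<Sum>i<N. x i) = L * real s + (L^2 + 1) * real s - real s ^ 2"
    using split[of x] sum_x_R card_K by (simp add: x_v x_K)
  then have sum_x: "(\<Sum>i<N. x i) = 0"
    by (simp add: s power2_eq_square algebra_simps)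
  have "sq_norm N x = (L * real s)^2 + (L^2 + 1) * real s ^ 2 + real s ^ 2"
    using split[of "\<lambda>i. (x i)^2"] card_R card_K by (simp add: sq_norm_def x_v x_R x_K)
  then have norm: "sq_norm N x = (2 * L^2 + 2) * real s ^ 2"
    by (simp add: power_mult_distrib algebra_simps)
  have "quad_form N (\<lambda>i j. if join_clique n E i j then 1 else 0) x
      = - sq_norm N x - quad_form N (nonadj n E) x"
    using assms(1) sum_x by (rule quad_form_join_clique)
  also have "\<dots> \<le> - sq_norm N x - 2 * x v * sum x R"
    using quad_form_nonadj_isolated[OF assms(1) _ assms(2,3), of N x]
    by (simp add: N_def R_def x_def)
  also have "\<dots> = - (1 + L) * sq_norm N x"
    by (simp add: norm x_v sum_x_R power2_eq_square algebra_simps)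
  also have "\<dots> < - L * sq_norm N x"
  proof -
    have "real s > 0" by (simp add: s_def add_pos_nonneg)
    then have "sq_norm N x > 0" by (simp add: norm add_nonneg_pos)
    then show ?thesis by (simp add: algebra_simps)
  qed
  finally show ?thesis by (simp add: N_def L_def)
qed

theorem mainTheorem4:
  fixes lam :: nat
  assumes "lam \<ge> 2"
  shows "\<exists>p::nat. p > 0 \<and>
           (\<forall>E. simple_graph_on (lam^2 + 2) E \<and> has_isolated_vertex (lam^2 + 2) E \<longrightarrow>
              smallest_eigenvalue (adj_mat (lam^2 + 2 + p) (join_clique (lam^2 + 2) E))
                < - real lam)"
proof (intro exI[of _ "(lam^2 + lam + 1)^2"] conjI allI impI)
  show "(lam^2 + lam + 1)^2 > 0" by simp
  fix E
  assume "simple_graph_on (lam^2 + 2) E \<and> has_isolated_vertex (lam^2 + 2) E"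
  then obtain v where graph: "simple_graph_on (lam^2 + 2) E"
    and v: "v < lam^2 + 2" "\<forall>u<lam^2 + 2. \<not> E v u"
    unfolding has_isolated_vertex_def by blast
  have sym: "(if join_clique (lam^2 + 2) E i j then 1 else 0 :: real)
      = (if join_clique (lam^2 + 2) E j i then 1 else 0)"
    if "i < lam^2 + 2 + (lam^2 + lam + 1)^2" "j < lam^2 + 2 + (lam^2 + lam + 1)^2" for i j
    using graph by (auto simp: join_clique_def simple_graph_on_def)
  show "smallest_eigenvalue (adj_mat (lam^2 + 2 + (lam^2 + lam + 1)^2) (join_clique (lam^2 + 2) E))
      < - real lam"
    unfolding adj_mat_def
    by (rule smallest_eigenvalue_less_if_quad_form_less[OF sym join_clique_test_vector[OF graph v refl]])
qed

end
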